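(* Let $T$ be a complete theory with monster model $\mathcal{U}$, $A\subseteq\mathcal{U}$ small, $\mu\in\mathfrak{M}_x(\mathcal{U})$, $\nu\in\mathfrak{M}_y(\mathcal{U})$, and suppose $\lambda\in\mathfrak{M}_{xy}(A)$ witnesses $\mu\geq_{\mathbb{E},A}\nu$. Then for every $\psi(y)\in\mathcal{L}_y(\mathcal{U})$ and $\epsilon>0$ there exist $\chi^-_\epsilon(x,y),\chi^+_\epsilon(x,y)\in\mathbb{B}_{xy}(A)$ such that (1) $\chi^-_\epsilon(x,y)\subseteq(\psi(y)\wedge x=x)\subseteq\chi^+_\epsilon(x,y)$; (2) for every $\omega\in\operatorname{E}(\lambda,\mu)$, $\omega(\chi^+_\epsilon(x,y))-\omega(\chi^-_\epsilon(x,y))<\epsilon$; (3) for every $\omega\in\operatorname{E}(\lambda,\mu)$, $|\omega(\chi^{\dagger}_\epsilon(x,y))-\nu(\psi(y))|<\epsilon$ for $\dagger\in\{+,-\}$.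
   Context: For $B\subseteq\mathcal{U}$, $\mathcal{L}_x(B)$ is the Boolean algebra of formulas in $x$ with parameters from $B$ modulo $T$, identified with $B$-definable sets, and embedded in $\mathcal{L}_{xy}(B)$ via $\varphi(x)\mapsto\varphi(x)\wedge y=y$; $\mathfrak{M}_x(B)$ is the set of finitely additive probability measures on $\mathcal{L}_x(B)$. For $\omega\in\mathfrak{M}_{xy}(B)$, $\pi_x(\omega)(\varphi(x))=\omega(\varphi(x)\wedge y=y)$ (similarly $\pi_y$); $\omega|_C$ is restriction. $\operatorname{E}(\lambda,\mu)=\{\omega\in\mathfrak{M}_{xy}(\mathcal{U}):\omega|_A=\lambda,\pi_x(\omega)=\mu\}$. $\lambda$ witnesses $\mu\geq_{\mathbb{E},A}\nu$ means $\pi_x(\lambda)=\mu|_A$ and $\pi_y(\omega)=\nu$ for all $\omega\in\operatorname{E}(\lambda,\mu)$. $\mathbb{B}_{xy}(A)$ is the Boolean subalgebra of $\mathcal{L}_{xy}(\mathcal{U})$ generated by $\{\varphi(x)\wedge y=y:\varphi(x)\in\mathcal{L}_x(\mathcal{U})\}\cup\mathcal{L}_{xy}(A)$. *)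

theory Defs
  imports Complex_Main
begin

datatype ('f, 'u) trm = Var nat | Prm 'u | Fn 'f "('f, 'u) trm list"

datatype ('f, 'r, 'u) fm =
    Eq "('f, 'u) trm" "('f, 'u) trm"
  | Rel 'r "('f, 'u) trm list"
  | Neg "('f, 'r, 'u) fm"
  | Conj "('f, 'r, 'u) fm" "('f, 'r, 'u) fm"
  | Ex nat "('f, 'r, 'u) fm"

fun evalt :: "('f \<Rightarrow> 'u list \<Rightarrow> 'u) \<Rightarrow> (nat \<Rightarrow> 'u) \<Rightarrow> ('f, 'u) trm \<Rightarrow> 'u" where
  "evalt F e (Var i) = e i"
| "evalt F e (Prm a) = a"
| "evalt F e (Fn f ts) = F f (map (evalt F e) ts)"

fun fvt :: "('f, 'u) trm \<Rightarrow> nat set" where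
  "fvt (Var i) = {i}"
| "fvt (Prm a) = {}"
| "fvt (Fn f ts) = (\<Union>t\<in>set ts. fvt t)"

fun prmt :: "('f, 'u) trm \<Rightarrow> 'u set" where
  "prmt (Var i) = {}"
| "prmt (Prm a) = {a}"
| "prmt (Fn f ts) = (\<Union>t\<in>set ts. prmt t)"

fun sat :: "('f \<Rightarrow> 'u list \<Rightarrow> 'u) \<Rightarrow> ('r \<Rightarrow> 'u list \<Rightarrow> bool) \<Rightarrow> (nat \<Rightarrow> 'u)
            \<Rightarrow> ('f, 'r, 'u) fm \<Rightarrow> bool" where
  "sat F R e (Eq s t) = (evalt F e s = evalt F e t)"
| "sat F R e (Rel r ts) = R r (map (evalt F e) ts)"
| "sat F R e (Neg \<phi>) = (\<not> sat F R e \<phi>)"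
| "sat F R e (Conj \<phi> \<psi>) = (sat F R e \<phi> \<and> sat F R e \<psi>)"
| "sat F R e (Ex i \<phi>) = (\<exists>a. sat F R (e(i := a)) \<phi>)"

fun fvf :: "('f, 'r, 'u) fm \<Rightarrow> nat set" where
  "fvf (Eq s t) = fvt s \<union> fvt t"
| "fvf (Rel r ts) = (\<Union>t\<in>set ts. fvt t)"
| "fvf (Neg \<phi>) = fvf \<phi>"
| "fvf (Conj \<phi> \<psi>) = fvf \<phi> \<union> fvf \<psi>"
| "fvf (Ex i \<phi>) = fvf \<phi> - {i}"

fun prmf :: "('f, 'r, 'u) fm \<Rightarrow> 'u set" where
  "prmf (Eq s t) = prmt s \<union> prmt t"
| "prmf (Rel r ts) = (\<Union>t\<in>set ts. prmt t)"
| "prmf (Neg \<phi>) = prmf \<phi>"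
| "prmf (Conj \<phi> \<psi>) = prmf \<phi> \<union> prmf \<psi>"
| "prmf (Ex i \<phi>) = prmf \<phi>"

text \<open>The structure (F,R) on the whole type 'u is the monster model U, and T = Th(U).\<close>

definition kappa_saturated ::
  "('f \<Rightarrow> 'u list \<Rightarrow> 'u) \<Rightarrow> ('r \<Rightarrow> 'u list \<Rightarrow> bool) \<Rightarrow> 'u set \<Rightarrow> bool" where
  "kappa_saturated F R k \<longleftrightarrow>
     (\<forall>B p. (card_of B, card_of k) \<in> ordLess
        \<longrightarrow> (\<forall>\<phi>\<in>p. fvf \<phi> \<subseteq> {0} \<and> prmf \<phi> \<subseteq> B)
        \<longrightarrow> (\<forall>q. finite q \<and> q \<subseteq> p \<longrightarrow> (\<exists>a. \<forall>\<phi>\<in>q. sat F R (\<lambda>_. a) \<phi>))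
        \<longrightarrow> (\<exists>a. \<forall>\<phi>\<in>p. sat F R (\<lambda>_. a) \<phi>))"

definition tuples :: "nat \<Rightarrow> 'u list set" where
  "tuples n = {v. length v = n}"

text \<open>A B-definable subset of U^n, i.e. (the class modulo T of) a formula in
  variables 0..n-1 with parameters from B.\<close>
definition Ldef ::
  "('f \<Rightarrow> 'u list \<Rightarrow> 'u) \<Rightarrow> ('r \<Rightarrow> 'u list \<Rightarrow> bool) \<Rightarrow> nat \<Rightarrow> 'u set \<Rightarrow> 'u list set set" where
  "Ldef F R n B = {X. \<exists>\<phi>::('f,'r,'u) fm. fvf \<phi> \<subseteq> {..<n} \<and> prmf \<phi> \<subseteq> B \<and>
                       X = {v. length v = n \<and> sat F R (\<lambda>i. v ! i) \<phi>}}"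

text \<open>Finitely additive probability measures on L_n(B) (Keisler measures);
  only values on L_n(B) are meaningful.\<close>
definition keisler ::
  "('f \<Rightarrow> 'u list \<Rightarrow> 'u) \<Rightarrow> ('r \<Rightarrow> 'u list \<Rightarrow> bool) \<Rightarrow> nat \<Rightarrow> 'u set \<Rightarrow> ('u list set \<Rightarrow> real) \<Rightarrow> bool" where
  "keisler F R n B m \<longleftrightarrow>
     m (tuples n) = 1 \<and> (\<forall>X\<in>Ldef F R n B. 0 \<le> m X) \<and>
     (\<forall>X\<in>Ldef F R n B. \<forall>Y\<in>Ldef F R n B. X \<inter> Y = {} \<longrightarrow> m (X \<union> Y) = m X + m Y)"

definition xcyl :: "nat \<Rightarrow> nat \<Rightarrow> 'u list set \<Rightarrow> 'u list set" where
  "xcyl n m X = {v. length v = n + m \<and> take n v \<in> X}"   (* phi(x) /\ y = y *)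

definition ycyl :: "nat \<Rightarrow> nat \<Rightarrow> 'u list set \<Rightarrow> 'u list set" where
  "ycyl n m Y = {v. length v = n + m \<and> drop n v \<in> Y}"   (* psi(y) /\ x = x *)

definition Eset ::
  "('f \<Rightarrow> 'u list \<Rightarrow> 'u) \<Rightarrow> ('r \<Rightarrow> 'u list \<Rightarrow> bool) \<Rightarrow> nat \<Rightarrow> nat \<Rightarrow> 'u set
   \<Rightarrow> ('u list set \<Rightarrow> real) \<Rightarrow> ('u list set \<Rightarrow> real) \<Rightarrow> ('u list set \<Rightarrow> real) set" where
  "Eset F R n m A lam mu =
     {om. keisler F R (n + m) UNIV om
        \<and> (\<forall>X\<in>Ldef F R (n + m) A. om X = lam X)
        \<and> (\<forall>X\<in>Ldef F R n UNIV. om (xcyl n m X) = mu X)}"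

definition witnesses_E ::
  "('f \<Rightarrow> 'u list \<Rightarrow> 'u) \<Rightarrow> ('r \<Rightarrow> 'u list \<Rightarrow> bool) \<Rightarrow> nat \<Rightarrow> nat \<Rightarrow> 'u set
   \<Rightarrow> ('u list set \<Rightarrow> real) \<Rightarrow> ('u list set \<Rightarrow> real) \<Rightarrow> ('u list set \<Rightarrow> real) \<Rightarrow> bool" where
  "witnesses_E F R n m A lam mu nu \<longleftrightarrow>
     (\<forall>X\<in>Ldef F R n A. lam (xcyl n m X) = mu X) \<and>
     (\<forall>om\<in>Eset F R n m A lam mu. \<forall>Y\<in>Ldef F R m UNIV. om (ycyl n m Y) = nu Y)"

inductive_set Bxy ::
  "('f \<Rightarrow> 'u list \<Rightarrow> 'u) \<Rightarrow> ('r \<Rightarrow> 'u list \<Rightarrow> bool) \<Rightarrow> nat \<Rightarrow> nat \<Rightarrow> 'u set \<Rightarrow> 'u list set set"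
  for F R n m A where
  gen_x: "X \<in> Ldef F R n UNIV \<Longrightarrow> xcyl n m X \<in> Bxy F R n m A"
| gen_A: "X \<in> Ldef F R (n + m) A \<Longrightarrow> X \<in> Bxy F R n m A"
| top: "tuples (n + m) \<in> Bxy F R n m A"
| compl: "X \<in> Bxy F R n m A \<Longrightarrow> tuples (n + m) - X \<in> Bxy F R n m A"
| inter: "X \<in> Bxy F R n m A \<Longrightarrow> Y \<in> Bxy F R n m A \<Longrightarrow> X \<inter> Y \<in> Bxy F R n m A"

end

(* All measures in E(lambda, mu) give psi(y) /\ x = x the same value nu(psi), and compactness turns
   this rigidity into uniform approximation by sets of B_xy(A). Suppose every chi in B_xy(A) below a set
   P has some omega in E with omega(chi) <= r. For a finite G in B_xy(A), take such an omega for the union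
   chi of the atoms of G lying inside P, and move the mass of each atom of G to one of its points, outside
   P unless the atom lies inside P: this is a finitely additive probability on all sets that agrees with
   omega on G and gives P the mass omega(chi) <= r. By Tychonoff's theorem in [0,1]^(sets), one such
   probability satisfies all the conditions defining E at once, so it lies in E and gives P measure <= r.
   Hence if all of E gives P measure > r, some chi in B_xy(A) below P already does; outer approximation
   follows by complementation. *)

theory Submission
  imports Defs "HOL-Analysis.Analysis"
begin

fun rename_trm :: "(nat \<Rightarrow> nat) \<Rightarrow> ('f, 'u) trm \<Rightarrow> ('f, 'u) trm" where
  "rename_trm \<rho> (Var i) = Var (\<rho> i)"
| "rename_trm \<rho> (Prm a) = Prm a"
| "rename_trm \<rho> (Fn f ts) = Fn f (map (rename_trm \<rho>) ts)"

fun rename_fm :: "(nat \<Rightarrow> nat) \<Rightarrow> ('f, 'r, 'u) fm \<Rightarrow> ('f, 'r, 'u) fm" where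
  "rename_fm \<rho> (Eq s t) = Eq (rename_trm \<rho> s) (rename_trm \<rho> t)"
| "rename_fm \<rho> (Rel r ts) = Rel r (map (rename_trm \<rho>) ts)"
| "rename_fm \<rho> (Neg \<phi>) = Neg (rename_fm \<rho> \<phi>)"
| "rename_fm \<rho> (Conj \<phi> \<psi>) = Conj (rename_fm \<rho> \<phi>) (rename_fm \<rho> \<psi>)"
| "rename_fm \<rho> (Ex i \<phi>) = Ex (\<rho> i) (rename_fm \<rho> \<phi>)"

lemma evalt_cong: "(\<And>i. i \<in> fvt t \<Longrightarrow> e i = e' i) \<Longrightarrow> evalt F e t = evalt F e' t"
proof (induction t)
  case (Fn f ts)
  have "evalt F e t = evalt F e' t" if "t \<in> set ts" for t
    by (rule Fn.IH[OF that]) (use Fn.prems that in auto)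
  then have "map (evalt F e) ts = map (evalt F e') ts"
    by (rule map_cong[OF refl])
  then show ?case by (simp only: evalt.simps)
qed simp_all

lemma sat_cong: "(\<And>i. i \<in> fvf \<phi> \<Longrightarrow> e i = e' i) \<Longrightarrow> sat F R e \<phi> = sat F R e' \<phi>"
proof (induction \<phi> arbitrary: e e')
  case (Eq s t)
  then show ?case
    using evalt_cong[of s e e' F] evalt_cong[of t e e' F] by simp
next
  case (Rel r ts)
  have "evalt F e t = evalt F e' t" if "t \<in> set ts" for t
    by (rule evalt_cong) (use Rel.prems that in auto)
  then have "map (evalt F e) ts = map (evalt F e') ts"
    by (rule map_cong[OF refl])
  then show ?case by (simp only: sat.simps)
next
  case (Neg \<phi>)
  have "sat F R e \<phi> = sat F R e' \<phi>"
    by (rule Neg.IH) (use Neg.prems in simp)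
  then show ?case by simp
next
  case (Conj \<phi> \<psi>)
  have "sat F R e \<phi> = sat F R e' \<phi>" "sat F R e \<psi> = sat F R e' \<psi>"
    by (rule Conj.IH(1), use Conj.prems in simp) (rule Conj.IH(2), use Conj.prems in simp)
  then show ?case by simp
next
  case (Ex i \<phi>)
  have "sat F R (e(i := a)) \<phi> = sat F R (e'(i := a)) \<phi>" for a
    by (rule Ex.IH) (use Ex.prems in auto)
  then show ?case by simp
qed

lemma evalt_rename_trm: "evalt F e (rename_trm \<rho> t) = evalt F (e \<circ> \<rho>) t"
  by (induction t) (auto cong: map_cong)

lemma fvt_rename_trm: "fvt (rename_trm \<rho> t) = \<rho> ` fvt t"
  by (induction t) auto

lemma prmt_rename_trm: "prmt (rename_trm \<rho> t) = prmt t"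
  by (induction t) auto

lemma sat_rename_fm:
  assumes "inj \<rho>"
  shows "sat F R e (rename_fm \<rho> \<phi>) = sat F R (e \<circ> \<rho>) \<phi>"
proof (induction \<phi> arbitrary: e)
  case (Ex i \<phi>)
  have "e(\<rho> i := a) \<circ> \<rho> = (e \<circ> \<rho>)(i := a)" for a
    using assms by (auto simp: inj_eq)
  then have "sat F R (e(\<rho> i := a) \<circ> \<rho>) \<phi> = sat F R ((e \<circ> \<rho>)(i := a)) \<phi>" for a
    by (simp only:)
  then show ?case
    by (simp only: rename_fm.simps sat.simps Ex.IH)
qed (simp_all add: evalt_rename_trm comp_def)

lemma fvf_rename_fm: "inj \<rho> \<Longrightarrow> fvf (rename_fm \<rho> \<phi>) = \<rho> ` fvf \<phi>"
  by (induction \<phi>) (auto simp: fvt_rename_trm image_Un image_set_diff)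

lemma prmf_rename_fm: "prmf (rename_fm \<rho> \<phi>) = prmf \<phi>"
  by (induction \<phi>) (auto simp: prmt_rename_trm)

lemma Ldef_subset_tuples: "X \<in> Ldef F R N B \<Longrightarrow> X \<subseteq> tuples N"
  unfolding Ldef_def tuples_def by auto

lemma Ldef_mono: "B \<subseteq> B' \<Longrightarrow> X \<in> Ldef F R N B \<Longrightarrow> X \<in> Ldef F R N B'"
  unfolding Ldef_def by blast

lemma algebra_Ldef: "algebra (tuples N) (Ldef F R N B)"
  unfolding algebra_iff_Int
proof (intro conjI ballI)
  show "Ldef F R N B \<subseteq> Pow (tuples N)"
    using Ldef_subset_tuples by blast
  show "{} \<in> Ldef F R N B"
    unfolding Ldef_def by (intro CollectI exI[of _ "Ex 0 (Neg (Eq (Var 0) (Var 0)))"]) auto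
next
  fix X assume "X \<in> Ldef F R N B"
  then obtain \<phi> where "fvf \<phi> \<subseteq> {..<N}" "prmf \<phi> \<subseteq> B"
      "X = {v. length v = N \<and> sat F R (\<lambda>i. v ! i) \<phi>}"
    unfolding Ldef_def by blast
  then show "tuples N - X \<in> Ldef F R N B"
    unfolding Ldef_def tuples_def by (intro CollectI exI[of _ "Neg \<phi>"]) auto
next
  fix X Y assume "X \<in> Ldef F R N B" "Y \<in> Ldef F R N B"
  then obtain \<phi> \<psi> where "fvf \<phi> \<subseteq> {..<N}" "prmf \<phi> \<subseteq> B"
      "X = {v. length v = N \<and> sat F R (\<lambda>i. v ! i) \<phi>}"
    and "fvf \<psi> \<subseteq> {..<N}" "prmf \<psi> \<subseteq> B"
      "Y = {v. length v = N \<and> sat F R (\<lambda>i. v ! i) \<psi>}"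
    unfolding Ldef_def by blast
  then show "X \<inter> Y \<in> Ldef F R N B"
    unfolding Ldef_def by (intro CollectI exI[of _ "Conj \<phi> \<psi>"]) auto
qed

lemma Ldef_xcyl: "X \<in> Ldef F R n B \<Longrightarrow> xcyl n m X \<in> Ldef F R (n + m) B"
proof -
  assume "X \<in> Ldef F R n B"
  then obtain \<phi> where \<phi>: "fvf \<phi> \<subseteq> {..<n}" "prmf \<phi> \<subseteq> B"
      "X = {v. length v = n \<and> sat F R (\<lambda>i. v ! i) \<phi>}"
    unfolding Ldef_def by blast
  have "sat F R (\<lambda>i. take n v ! i) \<phi> = sat F R (\<lambda>i. v ! i) \<phi>" for v :: "'a list"
    using \<phi>(1) by (intro sat_cong) auto
  then have "xcyl n m X = {v. length v = n + m \<and> sat F R (\<lambda>i. v ! i) \<phi>}"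
    unfolding xcyl_def \<phi>(3) by auto
  moreover have "fvf \<phi> \<subseteq> {..<n + m}"
    using \<phi>(1) by auto
  ultimately show ?thesis
    using \<phi>(2) unfolding Ldef_def by (intro CollectI exI[of _ \<phi>] conjI) assumption+
qed

lemma Ldef_ycyl: "Y \<in> Ldef F R m B \<Longrightarrow> ycyl n m Y \<in> Ldef F R (n + m) B"
proof -
  assume "Y \<in> Ldef F R m B"
  then obtain \<psi> where \<psi>: "fvf \<psi> \<subseteq> {..<m}" "prmf \<psi> \<subseteq> B"
      "Y = {v. length v = m \<and> sat F R (\<lambda>i. v ! i) \<psi>}"
    unfolding Ldef_def by blast
  define \<psi>' where "\<psi>' = rename_fm ((+) n) \<psi>"
  have "drop n v \<in> Y \<longleftrightarrow> sat F R (\<lambda>i. v ! i) \<psi>'" if "length v = n + m" for v :: "'a list"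
  proof -
    have "sat F R (\<lambda>i. v ! i) \<psi>' = sat F R (\<lambda>i. drop n v ! i) \<psi>"
      unfolding \<psi>'_def sat_rename_fm[OF inj_on_add]
      using that \<psi>(1) by (intro sat_cong) auto
    then show ?thesis
      using that unfolding \<psi>(3) by (simp del: nth_drop)
  qed
  then have "ycyl n m Y = {v. length v = n + m \<and> sat F R (\<lambda>i. v ! i) \<psi>'}"
    unfolding ycyl_def by auto
  moreover have "fvf \<psi>' \<subseteq> {..<n + m}" "prmf \<psi>' \<subseteq> B"
    using \<psi>(1,2) by (auto simp: \<psi>'_def fvf_rename_fm prmf_rename_fm)
  ultimately show ?thesis
    unfolding Ldef_def by (intro CollectI exI[of _ \<psi>'] conjI) assumption+
qed

lemma Bxy_subset_Ldef: "Bxy F R n m A \<subseteq> Ldef F R (n + m) UNIV"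
proof
  interpret Ldef: algebra "tuples (n + m)" "Ldef F R (n + m) UNIV"
    by (rule algebra_Ldef)
  fix X assume "X \<in> Bxy F R n m A"
  then show "X \<in> Ldef F R (n + m) UNIV"
    by induction (auto intro: Ldef_xcyl Ldef_mono)
qed

lemma algebra_Bxy: "algebra (tuples (n + m)) (Bxy F R n m A)"
  unfolding algebra_iff_Int
proof (intro conjI ballI)
  show "Bxy F R n m A \<subseteq> Pow (tuples (n + m))"
    using Bxy_subset_Ldef Ldef_subset_tuples by blast
  show "{} \<in> Bxy F R n m A"
    using Bxy.compl[OF Bxy.top] by simp
qed (auto intro: Bxy.compl Bxy.inter)

lemma
  assumes "keisler F R N B \<omega>"
  shows keisler_empty: "\<omega> {} = 0"
    and keisler_compl: "X \<in> Ldef F R N B \<Longrightarrow> \<omega> (tuples N - X) = 1 - \<omega> X"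
    and keisler_mono: "X \<in> Ldef F R N B \<Longrightarrow> Y \<in> Ldef F R N B \<Longrightarrow> X \<subseteq> Y \<Longrightarrow> \<omega> X \<le> \<omega> Y"
proof -
  interpret algebra "tuples N" "Ldef F R N B"
    by (rule algebra_Ldef)
  have add: "\<omega> (X \<union> Y) = \<omega> X + \<omega> Y"
    if "X \<in> Ldef F R N B" "Y \<in> Ldef F R N B" "X \<inter> Y = {}" for X Y
    using assms that unfolding keisler_def by blast
  show "\<omega> {} = 0"
    using add[of "{}" "{}"] by simp
  show "\<omega> (tuples N - X) = 1 - \<omega> X" if X: "X \<in> Ldef F R N B"
  proof -
    have "X \<union> (tuples N - X) = tuples N"
      using sets_into_space[OF X] by blast
    then show ?thesis
      using add[of X "tuples N - X"] X compl_sets[OF X] assms unfolding keisler_def by auto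
  qed
  show "\<omega> X \<le> \<omega> Y" if X: "X \<in> Ldef F R N B" and Y: "Y \<in> Ldef F R N B" and "X \<subseteq> Y"
  proof -
    have "Y = X \<union> (Y - X)"
      using \<open>X \<subseteq> Y\<close> by blast
    then have "\<omega> Y = \<omega> X + \<omega> (Y - X)"
      using add[of X "Y - X"] X Y by auto
    moreover have "0 \<le> \<omega> (Y - X)"
      using assms X Y unfolding keisler_def by blast
    ultimately show ?thesis by simp
  qed
qed

lemma keisler_UN_disjoint:
  assumes \<omega>: "keisler F R N B \<omega>" and "finite I"
    and "\<And>i. i \<in> I \<Longrightarrow> D i \<in> Ldef F R N B" and "disjoint_family_on D I"
  shows "\<omega> (\<Union>i\<in>I. D i) = (\<Sum>i\<in>I. \<omega> (D i))"
  using assms(2-)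
proof (induction I rule: finite_induct)
  case empty
  then show ?case using keisler_empty[OF \<omega>] by simp
next
  case (insert i I)
  interpret algebra "tuples N" "Ldef F R N B"
    by (rule algebra_Ldef)
  have "disjoint_family_on D I" "D i \<inter> (\<Union>j\<in>I. D j) = {}"
    using insert.prems(2) insert.hyps(2) by (auto simp: disjoint_family_on_def)
  moreover have "(\<Union>j\<in>I. D j) \<in> Ldef F R N B"
    using insert by blast
  ultimately show ?case
    using \<omega> insert unfolding keisler_def by simp
qed

definition atom :: "'a set \<Rightarrow> 'a set set \<Rightarrow> 'a set set \<Rightarrow> 'a set" where
  "atom \<Omega> G S = {v \<in> \<Omega>. \<forall>g\<in>G. v \<in> g \<longleftrightarrow> g \<in> S}"

lemma disjoint_family_on_atom: "disjoint_family_on (atom \<Omega> G) (Pow G)"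
  unfolding disjoint_family_on_def atom_def by blast

lemma atom_of_point: "v \<in> \<Omega> \<Longrightarrow> v \<in> atom \<Omega> G {g \<in> G. v \<in> g}"
  unfolding atom_def by blast

lemma UN_atom: "(\<Union>S\<in>Pow G. atom \<Omega> G S) = \<Omega>"
proof
  show "\<Omega> \<subseteq> (\<Union>S\<in>Pow G. atom \<Omega> G S)"
    using atom_of_point by fastforce
qed (auto simp: atom_def)

lemma UN_atom_containing:
  assumes "g \<in> G" "g \<subseteq> \<Omega>"
  shows "(\<Union>S\<in>{S\<in>Pow G. g \<in> S}. atom \<Omega> G S) = g"
proof
  show "g \<subseteq> (\<Union>S\<in>{S\<in>Pow G. g \<in> S}. atom \<Omega> G S)"
  proof
    fix v assume "v \<in> g"
    then have "v \<in> atom \<Omega> G {h \<in> G. v \<in> h}" "{h \<in> G. v \<in> h} \<in> {S\<in>Pow G. g \<in> S}"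
      using assms atom_of_point[of v \<Omega> G] by auto
    then show "v \<in> (\<Union>S\<in>{S\<in>Pow G. g \<in> S}. atom \<Omega> G S)" by blast
  qed
  show "(\<Union>S\<in>{S\<in>Pow G. g \<in> S}. atom \<Omega> G S) \<subseteq> g"
    using assms(1) unfolding atom_def by blast
qed

lemma (in algebra) atom_in_sets:
  assumes "finite G" "G \<subseteq> M"
  shows "atom \<Omega> G S \<in> M"
proof -
  define lit where "lit g = (if g \<in> S then g else \<Omega> - g)" for g
  have "atom \<Omega> G S = \<Omega> \<inter> (\<Inter>g\<in>G. lit g)"
    unfolding atom_def lit_def by auto
  moreover have "(\<Inter>g\<in>G. lit g) \<in> M" if "G \<noteq> {}"
    using assms that by (intro finite_INT) (auto simp: lit_def)
  ultimately show ?thesis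
    by (cases "G = {}") auto
qed

definition finitely_additive_prob :: "('a set \<Rightarrow> real) \<Rightarrow> bool" where
  "finitely_additive_prob f \<longleftrightarrow>
     (\<forall>X. 0 \<le> f X) \<and> f UNIV = 1 \<and> (\<forall>X Y. X \<inter> Y = {} \<longrightarrow> f (X \<union> Y) = f X + f Y)"

lemma finitely_additive_prob_le_1:
  assumes "finitely_additive_prob f"
  shows "f X \<le> 1"
proof -
  have "f UNIV = f (X \<union> - X)"
    by simp
  also have "\<dots> = f X + f (- X)"
    using assms unfolding finitely_additive_prob_def by blast
  finally have "f UNIV = f X + f (- X)" .
  then show ?thesis
    using assms unfolding finitely_additive_prob_def by (metis le_add_same_cancel1)
qed

lemma finitely_additive_prob_point_masses:
  fixes w :: "'i \<Rightarrow> real" and p :: "'i \<Rightarrow> 'a"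
  assumes "finite I" "\<And>i. i \<in> I \<Longrightarrow> 0 \<le> w i" "(\<Sum>i\<in>I. w i) = 1"
  shows "finitely_additive_prob (\<lambda>X. \<Sum>i\<in>I. w i * of_bool (p i \<in> X))"
  unfolding finitely_additive_prob_def
proof (intro conjI allI impI)
  fix X Y :: "'a set" assume "X \<inter> Y = {}"
  then have "w i * of_bool (p i \<in> X \<union> Y) = w i * of_bool (p i \<in> X) + w i * of_bool (p i \<in> Y)" for i
    by auto
  then show "(\<Sum>i\<in>I. w i * of_bool (p i \<in> X \<union> Y))
      = (\<Sum>i\<in>I. w i * of_bool (p i \<in> X)) + (\<Sum>i\<in>I. w i * of_bool (p i \<in> Y))"
    by (simp only: sum.distrib)
qed (use assms in \<open>auto intro: sum_nonneg\<close>)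

lemma sum_point_masses_eq:
  fixes w :: "'i \<Rightarrow> real" and p :: "'i \<Rightarrow> 'a"
  assumes "finite I" "\<And>i. i \<in> I \<Longrightarrow> w i \<noteq> 0 \<Longrightarrow> p i \<in> X \<longleftrightarrow> Q i"
  shows "(\<Sum>i\<in>I. w i * of_bool (p i \<in> X)) = (\<Sum>i\<in>{i\<in>I. Q i}. w i)"
proof -
  have "(\<Sum>i\<in>I. w i * of_bool (p i \<in> X)) = (\<Sum>i\<in>I. if Q i then w i else 0)"
    using assms(2) by (intro sum.cong) auto
  also have "\<dots> = (\<Sum>i\<in>{i\<in>I. Q i}. w i)"
    by (rule sum.inter_filter[OF assms(1), symmetric])
  finally show ?thesis .
qed

lemma keisler_UN_atoms:
  assumes \<omega>: "keisler F R N B \<omega>" and G: "finite G" "G \<subseteq> Ldef F R N B" and "\<S> \<subseteq> Pow G"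
  shows "\<omega> (\<Union>S\<in>\<S>. atom (tuples N) G S) = (\<Sum>S\<in>\<S>. \<omega> (atom (tuples N) G S))"
proof (rule keisler_UN_disjoint[OF \<omega>])
  show "finite \<S>"
    using G(1) \<open>\<S> \<subseteq> Pow G\<close> finite_subset by blast
  show "atom (tuples N) G S \<in> Ldef F R N B" for S
    using G by (rule algebra.atom_in_sets[OF algebra_Ldef])
  show "disjoint_family_on (atom (tuples N) G) \<S>"
    using \<open>\<S> \<subseteq> Pow G\<close> by (rule disjoint_family_on_mono[OF _ disjoint_family_on_atom])
qed

lemma keisler_extends_to_point_masses:
  assumes \<omega>: "keisler F R N B \<omega>" and G: "finite G" "G \<subseteq> Ldef F R N B"
  obtains f where "finitely_additive_prob f" "\<And>g. g \<in> G \<Longrightarrow> f g = \<omega> g"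
    and "f P = \<omega> (\<Union>S\<in>{S\<in>Pow G. atom (tuples N) G S \<subseteq> P}. atom (tuples N) G S)"
proof -
  interpret algebra "tuples N" "Ldef F R N B"
    by (rule algebra_Ldef)
  define cell where "cell = atom (tuples N) G"
  have cell_Ldef: "cell S \<in> Ldef F R N B" for S
    unfolding cell_def using G by (rule atom_in_sets)
  have \<omega>_UN_cell: "\<omega> (\<Union>S\<in>{S\<in>Pow G. Q S}. cell S) = (\<Sum>S\<in>{S\<in>Pow G. Q S}. \<omega> (cell S))" for Q
    unfolding cell_def by (rule keisler_UN_atoms[OF \<omega> G]) auto
  have "\<exists>v. cell S \<noteq> {} \<longrightarrow> v \<in> cell S \<and> (v \<in> P \<longleftrightarrow> cell S \<subseteq> P)" for S
    by blast
  then obtain p where p: "\<And>S. cell S \<noteq> {} \<Longrightarrow> p S \<in> cell S \<and> (p S \<in> P \<longleftrightarrow> cell S \<subseteq> P)"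
    by metis
  have cell_nonempty: "cell S \<noteq> {}" if "\<omega> (cell S) \<noteq> 0" for S
    using that keisler_empty[OF \<omega>] by auto
  define f where "f X = (\<Sum>S\<in>Pow G. \<omega> (cell S) * of_bool (p S \<in> X))" for X
  have f_eq: "f X = \<omega> (\<Union>S\<in>{S\<in>Pow G. Q S}. cell S)"
    if "\<And>S. S \<subseteq> G \<Longrightarrow> cell S \<noteq> {} \<Longrightarrow> p S \<in> X \<longleftrightarrow> Q S" for X Q
  proof -
    have "f X = (\<Sum>S\<in>{S\<in>Pow G. Q S}. \<omega> (cell S))"
      unfolding f_def using G(1) that cell_nonempty by (intro sum_point_masses_eq) auto
    then show ?thesis
      by (simp only: \<omega>_UN_cell)
  qed
  show ?thesis
  proof
    have "(\<Sum>S\<in>Pow G. \<omega> (cell S)) = \<omega> (tuples N)"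
      using \<omega>_UN_cell[of "\<lambda>_. True"] UN_atom[of "tuples N" G] by (simp add: cell_def Pow_def)
    then show "finitely_additive_prob f"
      unfolding f_def using G(1) \<omega> cell_Ldef
      by (intro finitely_additive_prob_point_masses) (auto simp: keisler_def)
    show "f g = \<omega> g" if "g \<in> G" for g
    proof -
      have "f g = \<omega> (\<Union>S\<in>{S\<in>Pow G. g \<in> S}. cell S)"
        using p that by (intro f_eq) (auto simp: cell_def atom_def)
      then show ?thesis
        using UN_atom_containing[OF that] sets_into_space that G(2) by (auto simp: cell_def)
    qed
    show "f P = \<omega> (\<Union>S\<in>{S\<in>Pow G. atom (tuples N) G S \<subseteq> P}. atom (tuples N) G S)"
      using p by (subst f_eq) (auto simp: cell_def)
  qed
qed

lemma closed_Collect_coordinate_in: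
  assumes "closed S"
  shows "closed {f :: 'a \<Rightarrow> real. f x \<in> S}"
proof -
  have "continuous_on UNIV (\<lambda>f :: 'a \<Rightarrow> real. f x)"
    by simp
  then have "closed ((\<lambda>f. f x) -` S \<inter> UNIV)"
    using continuous_on_closed_vimage[OF closed_UNIV] assms by blast
  then show ?thesis
    by (simp add: vimage_def)
qed

lemma compact_finitely_additive_prob: "compact {f :: 'a set \<Rightarrow> real. finitely_additive_prob f}"
proof -
  have "compactin (product_topology (\<lambda>_. euclidean) UNIV) (PiE UNIV (\<lambda>_::'a set. {0..1::real}))"
    by (simp add: compactin_PiE)
  then have "compact (Pi UNIV (\<lambda>_. {0..1}) :: ('a set \<Rightarrow> real) set)"
    by (simp add: euclidean_product_topology PiE_UNIV_domain)
  moreover have "closed {f :: 'a set \<Rightarrow> real. finitely_additive_prob f}"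
    unfolding finitely_additive_prob_def
    by (intro closed_Collect_conj closed_Collect_all closed_Collect_imp open_Collect_const
        closed_Collect_le closed_Collect_eq continuous_on_add continuous_on_const
        continuous_on_product_coordinates)
  moreover have "f \<in> Pi UNIV (\<lambda>_. {0..1})" if "finitely_additive_prob f" for f :: "'a set \<Rightarrow> real"
    using that finitely_additive_prob_le_1[OF that] unfolding finitely_additive_prob_def by (simp add: Pi_iff)
  then have "{f :: 'a set \<Rightarrow> real. finitely_additive_prob f} \<subseteq> Pi UNIV (\<lambda>_. {0..1})"
    by blast
  ultimately show ?thesis
    by (metis compact_Int_closed Int_absorb1)
qed

lemma finitely_additive_prob_compactness:
  fixes \<C> :: "('a set \<times> real set) set"
  assumes closed: "\<And>X S. (X, S) \<in> \<C> \<Longrightarrow> closed S"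
    and finite_sat: "\<And>\<C>'. finite \<C>' \<Longrightarrow> \<C>' \<subseteq> \<C> \<Longrightarrow>
        \<exists>f. finitely_additive_prob f \<and> (\<forall>(X, S)\<in>\<C>'. f X \<in> S)"
  shows "\<exists>f. finitely_additive_prob f \<and> (\<forall>(X, S)\<in>\<C>. f X \<in> S)"
proof -
  define sat_c where "sat_c c = {f :: 'a set \<Rightarrow> real. f (fst c) \<in> snd c}" for c :: "'a set \<times> real set"
  have "{f. finitely_additive_prob f} \<inter> \<Inter>(sat_c ` \<C>) \<noteq> {}"
  proof (rule compact_imp_fip[OF compact_finitely_additive_prob])
    show "closed T" if T: "T \<in> sat_c ` \<C>" for T
    proof -
      obtain X S where "(X, S) \<in> \<C>" "T = sat_c (X, S)"
        using T by force
      then show ?thesis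
        using closed[of X S] closed_Collect_coordinate_in[of S X] by (simp add: sat_c_def)
    qed
    fix \<F>' assume "finite \<F>'" "\<F>' \<subseteq> sat_c ` \<C>"
    from finite_subset_image[OF this] obtain \<C>'
      where \<C>': "\<C>' \<subseteq> \<C>" "finite \<C>'" "\<F>' = sat_c ` \<C>'"
      by blast
    then obtain f where "finitely_additive_prob f" "\<forall>(X, S)\<in>\<C>'. f X \<in> S"
      using finite_sat by blast
    then have "f \<in> {f. finitely_additive_prob f} \<inter> \<Inter>\<F>'"
      using \<C>'(3) by (auto simp: sat_c_def)
    then show "{f. finitely_additive_prob f} \<inter> \<Inter>\<F>' \<noteq> {}"
      by blast
  qed
  then obtain f where "finitely_additive_prob f" "\<And>c. c \<in> \<C> \<Longrightarrow> f \<in> sat_c c"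
    by blast
  then show ?thesis
    by (intro exI[of _ f] conjI) (auto simp: sat_c_def)
qed

definition Eset_constraints ::
  "('f \<Rightarrow> 'u list \<Rightarrow> 'u) \<Rightarrow> ('r \<Rightarrow> 'u list \<Rightarrow> bool) \<Rightarrow> nat \<Rightarrow> nat \<Rightarrow> 'u set
   \<Rightarrow> ('u list set \<Rightarrow> real) \<Rightarrow> ('u list set \<Rightarrow> real) \<Rightarrow> ('u list set \<times> real set) set" where
  "Eset_constraints F R n m A lam mu =
     insert (tuples (n + m), {1})
       ((\<lambda>X. (X, {lam X})) ` Ldef F R (n + m) A \<union> (\<lambda>X. (xcyl n m X, {mu X})) ` Ldef F R n UNIV)"

lemma Eset_constraints_in_Bxy:
  "(X, S) \<in> Eset_constraints F R n m A lam mu \<Longrightarrow> X \<in> Bxy F R n m A"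
  unfolding Eset_constraints_def by (auto intro: Bxy.intros)

lemma Eset_constraints_closed: "(X, S) \<in> Eset_constraints F R n m A lam mu \<Longrightarrow> closed S"
  unfolding Eset_constraints_def by auto

lemma Eset_satisfies_constraints:
  "\<omega> \<in> Eset F R n m A lam mu \<Longrightarrow> (X, S) \<in> Eset_constraints F R n m A lam mu \<Longrightarrow> \<omega> X \<in> S"
  unfolding Eset_def Eset_constraints_def keisler_def by auto

lemma Eset_if_satisfies_constraints:
  assumes "finitely_additive_prob f"
    and "\<And>X S. (X, S) \<in> Eset_constraints F R n m A lam mu \<Longrightarrow> f X \<in> S"
  shows "f \<in> Eset F R n m A lam mu"
proof -
  have "f (tuples (n + m)) = 1"
    using assms(2)[of "tuples (n + m)" "{1}"] by (simp add: Eset_constraints_def)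
  moreover have "f X = lam X" if "X \<in> Ldef F R (n + m) A" for X
    using assms(2)[of X "{lam X}"] that by (simp add: Eset_constraints_def)
  moreover have "f (xcyl n m X) = mu X" if "X \<in> Ldef F R n UNIV" for X
    using assms(2)[of "xcyl n m X" "{mu X}"] that by (simp add: Eset_constraints_def)
  ultimately show ?thesis
    using assms(1) unfolding Eset_def keisler_def finitely_additive_prob_def by blast
qed

lemma Eset_finite_constraints_satisfiable:
  assumes no_inner: "\<And>\<xi>. \<xi> \<in> Bxy F R n m A \<Longrightarrow> \<xi> \<subseteq> P \<Longrightarrow> \<exists>\<omega>\<in>Eset F R n m A lam mu. \<omega> \<xi> \<le> r"
    and "finite \<C>'" and \<C>': "\<C>' \<subseteq> insert (P, {..r}) (Eset_constraints F R n m A lam mu)"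
  shows "\<exists>f. finitely_additive_prob f \<and> (\<forall>(X, S)\<in>\<C>'. f X \<in> S)"
proof -
  interpret Bxy: algebra "tuples (n + m)" "Bxy F R n m A"
    by (rule algebra_Bxy)
  define G where "G = fst ` \<C>' \<inter> Bxy F R n m A"
  have G: "finite G" "G \<subseteq> Bxy F R n m A"
    unfolding G_def using \<open>finite \<C>'\<close> by auto
  define \<xi> where
    "\<xi> = (\<Union>S\<in>{S\<in>Pow G. atom (tuples (n + m)) G S \<subseteq> P}. atom (tuples (n + m)) G S)"
  have "\<xi> \<in> Bxy F R n m A"
    unfolding \<xi>_def using G by (intro Bxy.finite_UN Bxy.atom_in_sets) auto
  moreover have "\<xi> \<subseteq> P"
    unfolding \<xi>_def by blast
  ultimately obtain \<omega> where \<omega>: "\<omega> \<in> Eset F R n m A lam mu" "\<omega> \<xi> \<le> r"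
    using no_inner by blast
  have \<omega>_keisler: "keisler F R (n + m) UNIV \<omega>"
    using \<omega>(1) unfolding Eset_def by blast
  have G_Ldef: "G \<subseteq> Ldef F R (n + m) UNIV"
    using G(2) Bxy_subset_Ldef by blast
  obtain f where f: "finitely_additive_prob f" "\<And>g. g \<in> G \<Longrightarrow> f g = \<omega> g" "f P = \<omega> \<xi>"
    unfolding \<xi>_def by (elim keisler_extends_to_point_masses[OF \<omega>_keisler G(1) G_Ldef, of P])
  have "f X \<in> S" if "(X, S) \<in> \<C>'" for X S
  proof (cases "(X, S) = (P, {..r})")
    case False
    then have "(X, S) \<in> Eset_constraints F R n m A lam mu"
      using that \<C>' by blast
    moreover from this have "X \<in> G"
      unfolding G_def using that Eset_constraints_in_Bxy by force
    ultimately show ?thesis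
      using f(2) Eset_satisfies_constraints[OF \<omega>(1)] by simp
  qed (use f(3) \<omega>(2) in simp)
  with f(1) show ?thesis
    by blast
qed

lemma Eset_inner_approximation:
  assumes "\<forall>\<omega>\<in>Eset F R n m A lam mu. r < \<omega> P"
  shows "\<exists>\<xi>\<in>Bxy F R n m A. \<xi> \<subseteq> P \<and> (\<forall>\<omega>\<in>Eset F R n m A lam mu. r < \<omega> \<xi>)"
proof (rule ccontr)
  assume "\<not> ?thesis"
  then have no_inner: "\<exists>\<omega>\<in>Eset F R n m A lam mu. \<omega> \<xi> \<le> r"
    if "\<xi> \<in> Bxy F R n m A" "\<xi> \<subseteq> P" for \<xi>
    using that not_less by blast
  have "\<exists>f. finitely_additive_prob f \<and>
      (\<forall>(X, S)\<in>insert (P, {..r}) (Eset_constraints F R n m A lam mu). f X \<in> S)"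
  proof (rule finitely_additive_prob_compactness)
    show "closed S" if "(X, S) \<in> insert (P, {..r}) (Eset_constraints F R n m A lam mu)" for X S
      using that Eset_constraints_closed by auto
    show "\<exists>f. finitely_additive_prob f \<and> (\<forall>(X, S)\<in>\<C>'. f X \<in> S)"
      if "finite \<C>'" "\<C>' \<subseteq> insert (P, {..r}) (Eset_constraints F R n m A lam mu)" for \<C>'
      by (rule Eset_finite_constraints_satisfiable[OF _ that]) (rule no_inner)
  qed
  then obtain f where f: "finitely_additive_prob f"
    "\<forall>(X, S)\<in>insert (P, {..r}) (Eset_constraints F R n m A lam mu). f X \<in> S"
    by (elim exE conjE)
  have "f \<in> Eset F R n m A lam mu"
    by (rule Eset_if_satisfies_constraints[OF f(1)]) (use f(2) in blast)
  moreover have "f P \<le> r"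
    using f(2) by simp
  ultimately show False
    using assms by fastforce
qed

lemma Eset_outer_approximation:
  assumes P: "P \<in> Ldef F R (n + m) UNIV" and less: "\<forall>\<omega>\<in>Eset F R n m A lam mu. \<omega> P < r"
  shows "\<exists>\<xi>\<in>Bxy F R n m A. P \<subseteq> \<xi> \<and> (\<forall>\<omega>\<in>Eset F R n m A lam mu. \<omega> \<xi> < r)"
proof -
  let ?t = "tuples (n + m)"
  have \<omega>: "keisler F R (n + m) UNIV \<omega>" if "\<omega> \<in> Eset F R n m A lam mu" for \<omega>
    using that unfolding Eset_def by blast
  have "1 - r < \<omega> (?t - P)" if "\<omega> \<in> Eset F R n m A lam mu" for \<omega>
    using keisler_compl[OF \<omega>[OF that] P] less that by fastforce
  then obtain \<xi> where \<xi>: "\<xi> \<in> Bxy F R n m A" "\<xi> \<subseteq> ?t - P"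
    "\<forall>\<omega>\<in>Eset F R n m A lam mu. 1 - r < \<omega> \<xi>"
    using Eset_inner_approximation[where r = "1 - r" and P = "?t - P"] by blast
  have "\<omega> (?t - \<xi>) < r" if "\<omega> \<in> Eset F R n m A lam mu" for \<omega>
    using keisler_compl[OF \<omega>[OF that]] \<xi>(1,3) that Bxy_subset_Ldef by fastforce
  moreover have "?t - \<xi> \<in> Bxy F R n m A"
    using \<xi>(1) by (rule Bxy.compl)
  moreover have "P \<subseteq> ?t - \<xi>"
    using \<xi>(2) Ldef_subset_tuples[OF P] by blast
  ultimately show ?thesis
    by blast
qed

theorem theorem3p18:
  fixes F :: "'f \<Rightarrow> 'u list \<Rightarrow> 'u" and R :: "'r \<Rightarrow> 'u list \<Rightarrow> bool"
    and k A :: "'u set" and n m :: nat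
    and mu nu lam :: "'u list set \<Rightarrow> real"
  assumes monster: "kappa_saturated F R k" and kinf: "infinite k"
    and small: "(card_of A, card_of k) \<in> ordLess"
    and mu: "keisler F R n UNIV mu"
    and nu: "keisler F R m UNIV nu"
    and lam: "keisler F R (n + m) A lam"
    and wit: "witnesses_E F R n m A lam mu nu"
  shows "\<forall>\<psi>\<in>Ldef F R m UNIV. \<forall>\<epsilon>>0. \<exists>chim chip.
           chim \<in> Bxy F R n m A \<and> chip \<in> Bxy F R n m A \<and>
           chim \<subseteq> ycyl n m \<psi> \<and> ycyl n m \<psi> \<subseteq> chip \<and>
           (\<forall>om\<in>Eset F R n m A lam mu. om chip - om chim < \<epsilon>) \<and>
           (\<forall>om\<in>Eset F R n m A lam mu.
              \<bar>om chip - nu \<psi>\<bar> < \<epsilon> \<and> \<bar>om chim - nu \<psi>\<bar> < \<epsilon>)"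
proof (intro ballI allI impI)
  fix \<psi> and \<epsilon> :: real
  assume \<psi>: "\<psi> \<in> Ldef F R m UNIV" and "\<epsilon> > 0"
  let ?Y = "ycyl n m \<psi>" and ?E = "Eset F R n m A lam mu"
  have Y: "?Y \<in> Ldef F R (n + m) UNIV"
    using \<psi> by (rule Ldef_ycyl)
  have \<omega>_Y: "\<omega> ?Y = nu \<psi>" if "\<omega> \<in> ?E" for \<omega>
    using wit \<psi> that unfolding witnesses_E_def by blast
  then have "\<forall>\<omega>\<in>?E. nu \<psi> - \<epsilon> / 2 < \<omega> ?Y" "\<forall>\<omega>\<in>?E. \<omega> ?Y < nu \<psi> + \<epsilon> / 2"
    using \<open>\<epsilon> > 0\<close> by simp_all
  from Eset_inner_approximation[OF this(1)] Eset_outer_approximation[OF Y this(2)]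
  obtain chim chip where chim: "chim \<in> Bxy F R n m A" "chim \<subseteq> ?Y" "\<forall>\<omega>\<in>?E. nu \<psi> - \<epsilon> / 2 < \<omega> chim"
    and chip: "chip \<in> Bxy F R n m A" "?Y \<subseteq> chip" "\<forall>\<omega>\<in>?E. \<omega> chip < nu \<psi> + \<epsilon> / 2"
    by (elim bexE conjE)
  have bounds: "nu \<psi> - \<epsilon> / 2 < \<omega> chim \<and> \<omega> chim \<le> nu \<psi> \<and> nu \<psi> \<le> \<omega> chip \<and> \<omega> chip < nu \<psi> + \<epsilon> / 2"
    if "\<omega> \<in> ?E" for \<omega>
  proof -
    have "keisler F R (n + m) UNIV \<omega>"
      using that unfolding Eset_def by blast
    from keisler_mono[OF this] have "\<omega> chim \<le> \<omega> ?Y" "\<omega> ?Y \<le> \<omega> chip"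
      using chim(1,2) chip(1,2) Y Bxy_subset_Ldef by blast+
    then show ?thesis
      using chim(3) chip(3) \<omega>_Y that by simp
  qed
  show "\<exists>chim chip.
           chim \<in> Bxy F R n m A \<and> chip \<in> Bxy F R n m A \<and>
           chim \<subseteq> ?Y \<and> ?Y \<subseteq> chip \<and>
           (\<forall>om\<in>?E. om chip - om chim < \<epsilon>) \<and>
           (\<forall>om\<in>?E. \<bar>om chip - nu \<psi>\<bar> < \<epsilon> \<and> \<bar>om chim - nu \<psi>\<bar> < \<epsilon>)"
  proof (intro exI conjI ballI)
    fix \<omega> assume "\<omega> \<in> ?E"
    from bounds[OF this] show "\<omega> chip - \<omega> chim < \<epsilon>" "\<bar>\<omega> chip - nu \<psi>\<bar> < \<epsilon>" "\<bar>\<omega> chim - nu \<psi>\<bar> < \<epsilon>"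
      by linarith+
  qed (use chim chip in auto)
qed

end
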